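(* Let $G$ be a locally compact group with Haar measure $\nu$. For every open symmetric relatively compact neighborhood $V$ of the identity and every compact set $B\subseteq G$ there exist a regular compact set $C'$ and finitely many elements $g_1,\dots,g_n\in G$ such that: the interior of $C'$ is $V$-connected; $\nu(\partial C')=0$; $B\subseteq\bigcup_{i=1}^n g_iC'$; and $g_iC'V\cap g_jC'V=\emptyset$ for $i\neq j$.
   Context: A compact set is regular if it equals the closure of its interior. A set $S\subseteq G$ is $V$-disconnected if there is $A\subseteq S$ with $A\neq\emptyset$, $A\neq S$ and $AV\cap S=A$; otherwise $S$ is $V$-connected. $\partial C'$ is the topological boundary. *)

theory Defs
  imports "HOL-Analysis.Analysis" "HOL-Probability.Probability"
begin

text \<open>Groups are written additively (class group_add, not necessarily commutative):
  g C' is rendered as the left translate ((+) g) ` C', and A V as the pointwise sum set.\<close>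

definition setmul :: "'a::plus set \<Rightarrow> 'a set \<Rightarrow> 'a set" where
  "setmul A B = {a + b | a b. a \<in> A \<and> b \<in> B}"

definition topological_group :: "'a::{topological_space, group_add} itself \<Rightarrow> bool" where
  "topological_group _ \<longleftrightarrow>
     continuous_on (UNIV :: ('a \<times> 'a) set) (\<lambda>p. fst p + snd p) \<and>
     continuous_on (UNIV :: 'a set) uminus"

definition locally_compact_group :: "'a::{t2_space, group_add} itself \<Rightarrow> bool" where
  "locally_compact_group T \<longleftrightarrow> topological_group T \<and>
     locally_compact_space (euclidean :: 'a topology)"

definition haar_measure :: "'a::{t2_space, group_add} measure \<Rightarrow> bool" where
  "haar_measure \<nu> \<longleftrightarrow>
     sets \<nu> = sets borel \<and>
     (\<forall>g A. A \<in> sets borel \<longrightarrow> emeasure \<nu> ((+) g ` A) = emeasure \<nu> A) \<and>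
     (\<forall>K. compact K \<longrightarrow> emeasure \<nu> K < \<infinity>) \<and>
     (\<forall>U. open U \<and> U \<noteq> {} \<longrightarrow> emeasure \<nu> U > 0) \<and>
     (\<forall>A \<in> sets borel. emeasure \<nu> A = (INF U \<in> {U. open U \<and> A \<subseteq> U}. emeasure \<nu> U)) \<and>
     (\<forall>U. open U \<longrightarrow> emeasure \<nu> U = (SUP K \<in> {K. compact K \<and> K \<subseteq> U}. emeasure \<nu> K))"

definition regular_compact :: "'a::topological_space set \<Rightarrow> bool" where
  "regular_compact C \<longleftrightarrow> compact C \<and> C = closure (interior C)"

definition V_connected :: "'a::plus set \<Rightarrow> 'a set \<Rightarrow> bool" where
  "V_connected V S \<longleftrightarrow>
     \<not> (\<exists>A. A \<subseteq> S \<and> A \<noteq> {} \<and> A \<noteq> S \<and> setmul A V \<inter> S = A)"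

end

theory Submission
  imports Defs
begin

(* Since V is symmetric, the points reachable from 0 by finitely many V-steps form a subgroup H,
   and H contains the closure of V. Finitely many translates x + V cover B; choosing one
   representative g in each coset of H that meets them, B is covered by the translates g + K of
   one compact K inside H, the g lying in pairwise distinct cosets. Every point of H is joined
   to 0 by a finite V-chain, so K is covered by F + V for a finite V-connected F in H. A Urysohn
   function that vanishes on K and F and equals 1 outside F + V has level sets of measure zero
   for all but countably many levels t; the closure C' of its sublevel set at such a t is
   regular compact with null frontier. As F lies in the interior of C' and the interior lies in
   F + V, the interior is V-connected; and C' + V stays in H, so translates of C' + V by
   distinct coset representatives are disjoint. *)

lemma setmul_iff: "z \<in> setmul A V \<longleftrightarrow> (\<exists>a\<in>A. \<exists>v\<in>V. z = a + v)"
  unfolding setmul_def by auto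

lemma setmul_mono: "A \<subseteq> A' \<Longrightarrow> V \<subseteq> V' \<Longrightarrow> setmul A V \<subseteq> setmul A' V'"
  unfolding setmul_def by blast

lemma subset_setmul:
  assumes "0 \<in> V"
  shows "A \<subseteq> setmul A (V :: 'a::monoid_add set)"
proof
  fix a assume "a \<in> A"
  then show "a \<in> setmul A V" unfolding setmul_iff using assms by (metis add_0_right)
qed

lemma minus_mem_symmetric: "uminus ` V = V \<Longrightarrow> v \<in> V \<Longrightarrow> - v \<in> V"
  by (metis image_eqI)

lemma V_connectedI:
  assumes "\<And>A. A \<subseteq> S \<Longrightarrow> A \<noteq> {} \<Longrightarrow> setmul A V \<inter> S = A \<Longrightarrow> S \<subseteq> A"
  shows "V_connected V S"
  using assms unfolding V_connected_def by blast

lemma V_connectedD: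
  fixes V :: "'a::monoid_add set"
  assumes "V_connected V S" "0 \<in> V" "A \<inter> S \<noteq> {}" "setmul A V \<inter> S \<subseteq> A"
  shows "S \<subseteq> A"
proof -
  have "setmul (A \<inter> S) V \<inter> S \<subseteq> A \<inter> S"
    using assms(4) setmul_mono[of "A \<inter> S" A V V] by blast
  moreover have "A \<inter> S \<subseteq> setmul (A \<inter> S) V \<inter> S"
    using subset_setmul[OF assms(2)] by blast
  ultimately have "A \<inter> S = S"
    using assms(1,3) unfolding V_connected_def by blast
  then show ?thesis by blast
qed

lemma V_connected_singleton: "V_connected V {x}"
  unfolding V_connected_def by blast

lemma V_connected_Union:
  fixes V :: "'a::monoid_add set"
  assumes "0 \<in> V" and conn: "\<And>P. P \<in> Ps \<Longrightarrow> V_connected V P"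
    and common: "\<And>P. P \<in> Ps \<Longrightarrow> c \<in> P"
  shows "V_connected V (\<Union>Ps)"
proof (rule V_connectedI)
  fix A assume A: "A \<subseteq> \<Union>Ps" "A \<noteq> {}" "setmul A V \<inter> \<Union>Ps = A"
  have closed: "setmul A V \<inter> P \<subseteq> A" if "P \<in> Ps" for P
  proof -
    have "setmul A V \<inter> P \<subseteq> setmul A V \<inter> \<Union>Ps" using that by blast
    then show ?thesis using A(3) by simp
  qed
  obtain P where P: "P \<in> Ps" "A \<inter> P \<noteq> {}" using A(1,2) by blast
  have "c \<in> A"
    using V_connectedD[OF conn[OF P(1)] assms(1) P(2) closed[OF P(1)]] common[OF P(1)] by blast
  then have "Q \<subseteq> A" if "Q \<in> Ps" for Q
    using V_connectedD[OF conn[OF that] assms(1) _ closed[OF that]] common[OF that] by blast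
  then show "\<Union>Ps \<subseteq> A" by blast
qed

lemma V_connected_between:
  fixes V :: "'a::group_add set"
  assumes conn: "V_connected V F" and V: "0 \<in> V" "uminus ` V = V"
    and FW: "F \<subseteq> W" and WF: "W \<subseteq> setmul F V"
  shows "V_connected V W"
proof (rule V_connectedI)
  fix A assume A: "A \<subseteq> W" "A \<noteq> {}" "setmul A V \<inter> W = A"
  obtain a where a: "a \<in> A" using A(2) by blast
  then obtain f v where fv: "f \<in> F" "v \<in> V" "a = f + v"
    using A(1) WF unfolding subset_eq setmul_iff by blast
  have "f = a + - v" by (simp add: fv(3) add.assoc)
  then have "f \<in> setmul A V"
    unfolding setmul_iff using a minus_mem_symmetric[OF V(2) fv(2)] by blast
  then have "f \<in> setmul A V \<inter> W" using FW fv(1) by blast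
  then have "A \<inter> F \<noteq> {}" using A(3) fv(1) by auto
  moreover have "setmul A V \<inter> F \<subseteq> setmul A V \<inter> W" using FW by blast
  ultimately have "F \<subseteq> A"
    using V_connectedD[OF conn V(1)] A(3) by simp
  then have "W \<subseteq> setmul A V \<inter> W"
    using WF setmul_mono[of F A V V] by blast
  then show "W \<subseteq> A" using A(3) by simp
qed

inductive_set reachable :: "'a::monoid_add set \<Rightarrow> 'a set" for V where
  zero: "0 \<in> reachable V"
| step: "x \<in> reachable V \<Longrightarrow> v \<in> V \<Longrightarrow> x + v \<in> reachable V"

lemma reachable_of_mem: "v \<in> V \<Longrightarrow> v \<in> reachable V"
  using reachable.step[OF reachable.zero] by fastforce

lemma reachable_add:
  assumes "x \<in> reachable V"
  shows "y \<in> reachable V \<Longrightarrow> x + y \<in> reachable V"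
proof (induction y rule: reachable.induct)
  case zero
  then show ?case using assms by simp
next
  case (step y v)
  then show ?case using reachable.step[of "x + y" V v] by (simp add: add.assoc)
qed

lemma reachable_minus:
  assumes "uminus ` V = V"
  shows "x \<in> reachable V \<Longrightarrow> - x \<in> reachable (V :: 'a::group_add set)"
proof (induction x rule: reachable.induct)
  case zero
  then show ?case by (simp add: reachable.zero)
next
  case (step x v)
  have "- v + - x \<in> reachable V"
    using reachable_add[OF reachable_of_mem[OF minus_mem_symmetric[OF assms step(2)]] step(3)] .
  then show ?case by (simp add: minus_add)
qed

lemma reachable_in_finite_V_connected:
  fixes V :: "'a::group_add set"
  assumes V: "0 \<in> V" "uminus ` V = V"
  shows "x \<in> reachable V \<Longrightarrow>
    \<exists>P. finite P \<and> 0 \<in> P \<and> x \<in> P \<and> P \<subseteq> reachable V \<and> V_connected V P"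
proof (induction x rule: reachable.induct)
  case zero
  show ?case
    using V_connected_singleton reachable.zero by (intro exI[of _ "{0}"]) auto
next
  case (step x v)
  then obtain P where P: "finite P" "0 \<in> P" "x \<in> P" "P \<subseteq> reachable V" "V_connected V P"
    by blast
  have "x + v \<in> setmul P V"
    using P(3) step(2) unfolding setmul_iff by blast
  then have "insert (x + v) P \<subseteq> setmul P V"
    using subset_setmul[OF V(1), of P] by blast
  then have "V_connected V (insert (x + v) P)"
    by (intro V_connected_between[OF P(5) V]) auto
  then show ?case
    using P reachable.step[OF step(1,2)] by (intro exI[of _ "insert (x + v) P"]) auto
qed

lemma finite_coset_representatives:
  fixes H :: "'a::group_add set"
  assumes H: "0 \<in> H" "\<And>x y. x \<in> H \<Longrightarrow> y \<in> H \<Longrightarrow> x + y \<in> H" "\<And>x. x \<in> H \<Longrightarrow> - x \<in> H"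
    and "finite X"
  shows "\<exists>G. finite G \<and> X \<subseteq> (\<Union>g\<in>G. (+) g ` H) \<and>
           (\<forall>g\<in>G. \<forall>g'\<in>G. g \<noteq> g' \<longrightarrow> (+) g ` H \<inter> (+) g' ` H = {})"
  using \<open>finite X\<close>
proof (induction X rule: finite_induct)
  case empty
  show ?case by (intro exI[of _ "{}"]) simp
next
  case (insert x X)
  from insert.IH obtain G where G: "finite G" "X \<subseteq> (\<Union>g\<in>G. (+) g ` H)"
    "\<forall>g\<in>G. \<forall>g'\<in>G. g \<noteq> g' \<longrightarrow> (+) g ` H \<inter> (+) g' ` H = {}"
    by metis
  show ?case
  proof (cases "x \<in> (\<Union>g\<in>G. (+) g ` H)")
    case True
    then have "insert x X \<subseteq> (\<Union>g\<in>G. (+) g ` H)" using G(2) by simp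
    then show ?thesis by (intro exI[of _ G] conjI G(1) G(3))
  next
    case False
    have new_coset: "(+) g ` H \<inter> (+) x ` H = {}" if "g \<in> G" for g
    proof (rule ccontr)
      assume "(+) g ` H \<inter> (+) x ` H \<noteq> {}"
      then obtain h h' where hh': "h \<in> H" "h' \<in> H" "g + h' = x + h" by auto
      have "x = (x + h) + - h" by (simp add: add.assoc)
      also have "\<dots> = g + (h' + - h)" by (metis hh'(3) add.assoc)
      finally have "x \<in> (+) g ` H" using H(2)[OF hh'(2) H(3)[OF hh'(1)]] by blast
      then show False using False that by blast
    qed
    have "x \<in> (+) x ` H" using H(1) by force
    then have cover: "insert x X \<subseteq> (\<Union>g\<in>insert x G. (+) g ` H)" using G(2) by blast
    have disjoint: "\<forall>g\<in>insert x G. \<forall>g'\<in>insert x G. g \<noteq> g' \<longrightarrow> (+) g ` H \<inter> (+) g' ` H = {}"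
      using G(3) new_coset by (auto simp: Int_commute)
    show ?thesis
      using G(1) by (intro exI[of _ "insert x G"] conjI cover disjoint) simp
  qed
qed

lemma continuous_on_left_translate:
  assumes "topological_group TYPE('a::{t2_space, group_add})"
  shows "continuous_on UNIV ((+) (a :: 'a))"
proof -
  have "continuous_on UNIV (\<lambda>p :: 'a \<times> 'a. fst p + snd p)"
    using assms unfolding topological_group_def by blast
  then have "continuous_on UNIV ((\<lambda>p :: 'a \<times> 'a. fst p + snd p) \<circ> Pair a)"
    by (intro continuous_on_compose) (auto intro: continuous_on_subset continuous_intros)
  then show ?thesis by (simp add: o_def)
qed

lemma left_translate_eq_vimage: "(+) (a :: 'a::group_add) ` S = (+) (- a) -` S"
  by (force simp: add.assoc[symmetric] intro: image_eqI[of _ _ "- a + x" for x])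

lemma open_left_translate:
  assumes "topological_group TYPE('a::{t2_space, group_add})" "open S"
  shows "open ((+) (a :: 'a) ` S)"
  unfolding left_translate_eq_vimage
  by (rule open_vimage[OF assms(2) continuous_on_left_translate[OF assms(1)]])

lemma compact_left_translate:
  assumes "topological_group TYPE('a::{t2_space, group_add})" "compact S"
  shows "compact ((+) (a :: 'a) ` S)"
  using continuous_on_subset[OF continuous_on_left_translate[OF assms(1)]] assms(2)
  by (rule compact_continuous_image) simp

lemma setmul_eq_UN: "setmul A V = (\<Union>a\<in>A. (+) a ` V)"
  unfolding setmul_def by blast

lemma open_setmul:
  assumes "topological_group TYPE('a::{t2_space, group_add})" "open V"
  shows "open (setmul A (V :: 'a set))"
  unfolding setmul_eq_UN using open_left_translate[OF assms] by blast

lemma compact_setmul: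
  assumes "topological_group TYPE('a::{t2_space, group_add})" "finite A" "compact K"
  shows "compact (setmul A (K :: 'a set))"
  unfolding setmul_eq_UN using compact_left_translate[OF assms(1,3)] assms(2) by blast

lemma closure_subset_reachable:
  assumes "topological_group TYPE('a::{t2_space, group_add})"
    and V: "open V" "0 \<in> V" "uminus ` V = (V :: 'a set)"
  shows "closure V \<subseteq> reachable V"
proof
  fix w assume w: "w \<in> closure V"
  have "open ((+) w ` V)" "w \<in> (+) w ` V"
    using open_left_translate[OF assms(1) V(1)] V(2) by force+
  then obtain v where v: "v \<in> V" "w + v \<in> V"
    using w open_Int_closure_eq_empty[of "(+) w ` V" V] by blast
  have "(w + v) + - v \<in> reachable V"
    using reachable_add[OF reachable_of_mem[OF v(2)] reachable_of_mem[OF minus_mem_symmetric[OF V(3) v(1)]]] .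
  then show "w \<in> reachable V" by (simp add: add.assoc)
qed

lemma finite_V_connected_cover:
  assumes tg: "topological_group TYPE('a::{t2_space, group_add})"
    and V: "open V" "0 \<in> V" "uminus ` V = (V :: 'a set)"
    and K: "compact K" "K \<subseteq> reachable V"
  obtains F where "finite F" "F \<subseteq> reachable V" "V_connected V F" "K \<subseteq> setmul F V"
proof -
  have "K \<subseteq> (\<Union>y\<in>K. (+) y ` V)" using V(2) by force
  then obtain Y where Y: "Y \<subseteq> K" "finite Y" "K \<subseteq> (\<Union>y\<in>Y. (+) y ` V)"
    using compactE_image[OF K(1), of K "\<lambda>y. (+) y ` V"] open_left_translate[OF tg V(1)] by metis
  obtain P where P: "\<And>y. y \<in> Y \<Longrightarrow>
      finite (P y) \<and> 0 \<in> P y \<and> y \<in> P y \<and> P y \<subseteq> reachable V \<and> V_connected V (P y)"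
    using reachable_in_finite_V_connected[OF V(2,3)] Y(1) K(2) by (metis subsetD)
  show ?thesis
  proof (rule that)
    show "finite (\<Union>(P ` Y))" "\<Union>(P ` Y) \<subseteq> reachable V"
      using P Y(2) by auto
    show "V_connected V (\<Union>(P ` Y))"
      using P by (intro V_connected_Union[OF V(2), where c = 0]) auto
    show "K \<subseteq> setmul (\<Union>(P ` Y)) V"
      using Y(3) P unfolding setmul_eq_UN by blast
  qed
qed

lemma compact_closure_of_subset:
  fixes K S :: "'a::t2_space set"
  assumes "compact K" "S \<subseteq> K"
  shows "compact (closure S)"
proof -
  have "closure S \<subseteq> K" by (rule closure_minimal[OF assms(2) compact_imp_closed[OF assms(1)]])
  then show ?thesis using compact_Int_closed[OF assms(1) closed_closure[of S]] by (simp add: Int_absorb1)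
qed

lemma null_level_set_exists:
  fixes \<nu> :: "'a::topological_space measure" and g :: "'a \<Rightarrow> real"
  assumes sets: "sets \<nu> = sets borel" and M: "M \<in> sets borel" "emeasure \<nu> M < \<infinity>"
    and g: "continuous_on M g" and "a < b"
  obtains t where "a < t" "t < b" "emeasure \<nu> {x\<in>M. g x = t} = 0"
proof -
  have space: "space \<nu> = UNIV" using sets_eq_imp_space_eq[OF sets] by simp
  have M_sets: "M \<in> sets \<nu>" using M(1) sets by simp
  define N where "N = restrict_space \<nu> M"
  have "finite_measure N"
    unfolding N_def
    by (rule finite_measureI) (use M(2) M_sets space in \<open>auto simp: space_restrict_space emeasure_restrict_space\<close>)
  moreover have g_meas: "g \<in> borel_measurable N"
  proof -
    have "sets N = sets (restrict_space borel M)"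
      unfolding N_def by (rule sets_restrict_space_cong[OF sets])
    then show ?thesis
      using borel_measurable_continuous_on_restrict[OF g] measurable_cong_sets by blast
  qed
  ultimately have "finite_measure (distr N borel g)"
    by (rule finite_measure.finite_measure_distr)
  \<comment> \<open>the level sets of g are the atoms of this finite measure on the reals\<close>
  then have "countable {t. measure (distr N borel g) {t} \<noteq> 0}"
    by (rule finite_measure.countable_support)
  then have "\<not> {a<..<b} \<subseteq> {t. measure (distr N borel g) {t} \<noteq> 0}"
    using countable_subset uncountable_open_interval[of a b] \<open>a < b\<close> by auto
  then obtain t where t: "t \<in> {a<..<b}" "measure (distr N borel g) {t} = 0"
    by blast
  have "g -` {t} \<inter> space N = {x\<in>M. g x = t}"
    unfolding N_def using space by (auto simp: space_restrict_space)
  then have "measure (distr N borel g) {t} = measure N {x\<in>M. g x = t}"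
    using measure_distr[OF g_meas, of "{t}"] by simp
  also have "\<dots> = measure \<nu> {x\<in>M. g x = t}"
    unfolding N_def by (rule measure_restrict_space) (use M_sets space in auto)
  finally have "measure \<nu> {x\<in>M. g x = t} = 0" using t(2) by simp
  moreover have "emeasure \<nu> {x\<in>M. g x = t} \<noteq> \<infinity>"
    using M(2) M_sets emeasure_mono[of "{x\<in>M. g x = t}" M \<nu>] by (auto simp: top_unique)
  ultimately have "emeasure \<nu> {x\<in>M. g x = t} = 0"
    using emeasure_eq_ennreal_measure[of \<nu> "{x\<in>M. g x = t}"] by simp
  then show ?thesis using t(1) by (intro that) auto
qed

lemma Urysohn_compact_open:
  fixes K W :: "'a::t2_space set"
  assumes "compact K" "open W" "K \<subseteq> W" "compact (closure W)"
  obtains g :: "'a \<Rightarrow> real" where "continuous_on (closure W) g" "\<And>x. x \<in> K \<Longrightarrow> g x = 0"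
    "\<And>x. x \<in> closure W - W \<Longrightarrow> g x = 1"
proof -
  let ?X = "subtopology euclidean (closure W)"
  have "Hausdorff_space (euclidean :: 'a topology)"
    unfolding Hausdorff_space_def using hausdorff by (auto simp: disjnt_def)
  then have "normal_space ?X"
    using assms(4)
    by (intro compact_Hausdorff_or_regular_imp_normal_space)
      (auto intro: compact_space_subtopology Hausdorff_space_subtopology)
  moreover have "closedin ?X K" "closedin ?X (closure W - W)"
    using assms closure_subset[of W] compact_imp_closed[OF assms(1)]
    by (auto simp: closedin_closed open_closed intro: exI[of _ "- W"])
  moreover have "disjnt K (closure W - W)"
    using assms(3) by (auto simp: disjnt_def)
  ultimately obtain g :: "'a \<Rightarrow> real"
    where "continuous_map ?X (top_of_set {0..1}) g" "g ` K \<subseteq> {0}" "g ` (closure W - W) \<subseteq> {1}"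
    using Urysohn_lemma[of ?X K "closure W - W" 0 1] by auto
  then show ?thesis
    using that[of g] by (auto simp: continuous_map_in_subtopology image_subset_iff)
qed

lemma regular_compact_null_frontier_between:
  fixes \<nu> :: "'a::t2_space measure" and K W :: "'a set"
  assumes sets: "sets \<nu> = sets borel" and fin: "\<And>S. compact S \<Longrightarrow> emeasure \<nu> S < \<infinity>"
    and KW: "compact K" "open W" "K \<subseteq> W" "compact (closure W)"
  obtains C where "regular_compact C" "emeasure \<nu> (frontier C) = 0" "K \<subseteq> interior C" "C \<subseteq> W"
proof -
  have cW: "closed (closure W)" "closure W \<in> sets borel" "emeasure \<nu> (closure W) < \<infinity>"
    using fin[OF KW(4)] by auto
  obtain g :: "'a \<Rightarrow> real" where g: "continuous_on (closure W) g" "\<And>x. x \<in> K \<Longrightarrow> g x = 0"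
    "\<And>x. x \<in> closure W - W \<Longrightarrow> g x = 1"
    by (rule Urysohn_compact_open[OF KW]) auto
  obtain t :: real where t: "0 < t" "t < 1" "emeasure \<nu> {x\<in>closure W. g x = t} = 0"
    by (rule null_level_set_exists[OF sets cW(2,3) g(1), of 0 1]) auto
  define U where "U = W \<inter> g -` {..<t}"
  define C where "C = closure U"
  have "open U"
    unfolding U_def using continuous_on_subset[OF g(1) closure_subset] KW(2)
    by (rule continuous_open_preimage) auto
  then have U_int: "U \<subseteq> interior C"
    unfolding C_def by (simp add: closure_subset interior_maximal)
  have "closed (closure W \<inter> g -` {..t})"
    using g(1) cW(1) by (rule continuous_closed_preimage) auto
  then have C_sub: "C \<subseteq> closure W \<inter> g -` {..t}"
    unfolding C_def U_def using closure_subset[of W] by (intro closure_minimal) auto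
  then have C_W: "C \<subseteq> W"
    using g(3) t(2) by force
  have "C = closure (interior C)"
    using closure_mono[OF U_int] closure_mono[OF interior_subset[of C]] unfolding C_def by auto
  moreover have "compact C"
    unfolding C_def using KW(4) closure_subset[of W] unfolding U_def
    by (intro compact_closure_of_subset) auto
  ultimately have "regular_compact C"
    unfolding regular_compact_def by blast
  moreover have frontier_sub: "frontier C \<subseteq> {x\<in>closure W. g x = t}"
  proof
    fix x assume "x \<in> frontier C"
    then have "x \<in> C" "x \<notin> U"
      using U_int unfolding frontier_def C_def by auto
    then have "x \<in> closure W" "g x \<le> t" "\<not> g x < t"
      using C_sub C_W unfolding U_def by auto
    then show "x \<in> {x\<in>closure W. g x = t}" by simp
  qed
  have "{x\<in>closure W. g x = t} = closure W \<inter> g -` {t}" by blast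
  then have "closed {x\<in>closure W. g x = t}"
    using continuous_closed_preimage[OF g(1) cW(1), of "{t}"] by simp
  then have "{x\<in>closure W. g x = t} \<in> sets \<nu>"
    unfolding sets by (rule borel_closed)
  then have "emeasure \<nu> (frontier C) = 0"
    using t(3) frontier_sub by (rule emeasure_eq_0)
  moreover have "K \<subseteq> interior C"
    using KW(3) g(2) t(1) U_int unfolding U_def by auto
  ultimately show ?thesis using C_W by (rule that)
qed

lemma haar_measure_sets: "haar_measure \<nu> \<Longrightarrow> sets \<nu> = sets borel"
  unfolding haar_measure_def by (elim conjE)

lemma haar_measure_compact_finite:
  assumes "haar_measure \<nu>" "compact K"
  shows "emeasure \<nu> K < \<infinity>"
  using assms(1)[unfolded haar_measure_def, THEN conjunct2, THEN conjunct2, THEN conjunct1] assms(2)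
  by blast

lemma regular_compact_V_connected_hull:
  fixes \<nu> :: "'a::{t2_space, group_add} measure" and V K :: "'a set"
  assumes tg: "topological_group TYPE('a)"
    and sets: "sets \<nu> = sets borel" and fin: "\<And>S. compact S \<Longrightarrow> emeasure \<nu> S < \<infinity>"
    and V: "open V" "0 \<in> V" "uminus ` V = V" "compact (closure V)"
    and K: "compact K" "K \<subseteq> reachable V"
  obtains C where "regular_compact C" "V_connected V (interior C)" "emeasure \<nu> (frontier C) = 0"
    "K \<subseteq> C" "C \<subseteq> reachable V"
proof -
  obtain F where F: "finite F" "F \<subseteq> reachable V" "V_connected V F" "K \<subseteq> setmul F V"
    by (rule finite_V_connected_cover[OF tg V(1-3) K])
  have "setmul F V \<subseteq> setmul F (closure V)"
    by (rule setmul_mono[OF order_refl closure_subset])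
  then have closure_compact: "compact (closure (setmul F V))"
    by (rule compact_closure_of_subset[OF compact_setmul[OF tg F(1) V(4)]])
  have KF_sub: "K \<union> F \<subseteq> setmul F V" using F(4) subset_setmul[OF V(2)] by blast
  obtain C where C: "regular_compact C" "emeasure \<nu> (frontier C) = 0"
    "K \<union> F \<subseteq> interior C" "C \<subseteq> setmul F V"
    by (rule regular_compact_null_frontier_between[OF sets fin
        compact_Un[OF K(1) finite_imp_compact[OF F(1)]] open_setmul[OF tg V(1)] KF_sub closure_compact])
  show ?thesis
  proof (rule that[OF C(1) _ C(2)])
    show "V_connected V (interior C)"
      using C(3,4) interior_subset[of C] by (intro V_connected_between[OF F(3) V(2,3)]) auto
    show "K \<subseteq> C" using C(3) interior_subset[of C] by blast
    show "C \<subseteq> reachable V"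
    proof
      fix c assume "c \<in> C"
      then obtain f v where "f \<in> F" "v \<in> V" "c = f + v"
        using C(4) unfolding subset_eq setmul_iff by blast
      then show "c \<in> reachable V"
        using F(2) by (blast intro: reachable.step)
    qed
  qed
qed

lemma compact_cover_by_coset_translates:
  fixes V H B :: "'a::{t2_space, group_add} set"
  assumes tg: "topological_group TYPE('a)"
    and V: "open V" "0 \<in> V" "compact (closure V)" "closure V \<subseteq> H"
    and H: "0 \<in> H" "\<And>x y. x \<in> H \<Longrightarrow> y \<in> H \<Longrightarrow> x + y \<in> H" "\<And>x. x \<in> H \<Longrightarrow> - x \<in> H"
    and B: "compact B"
  obtains G K where "finite G" "compact K" "K \<subseteq> H" "B \<subseteq> (\<Union>g\<in>G. (+) g ` K)"
    "\<forall>g\<in>G. \<forall>g'\<in>G. g \<noteq> g' \<longrightarrow> (+) g ` H \<inter> (+) g' ` H = {}"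
proof -
  have "B \<subseteq> (\<Union>x\<in>B. (+) x ` V)" using V(2) by force
  then obtain X where X: "X \<subseteq> B" "finite X" "B \<subseteq> (\<Union>x\<in>X. (+) x ` V)"
    using compactE_image[OF B, of B "\<lambda>x. (+) x ` V"] open_left_translate[OF tg V(1)] by metis
  from finite_coset_representatives[OF H X(2)]
  obtain G where G: "finite G" "X \<subseteq> (\<Union>g\<in>G. (+) g ` H)"
    "\<forall>g\<in>G. \<forall>g'\<in>G. g \<noteq> g' \<longrightarrow> (+) g ` H \<inter> (+) g' ` H = {}"
    by metis
  have "\<exists>g\<in>G. - g + x \<in> H" if x: "x \<in> X" for x
  proof -
    obtain g h where "g \<in> G" "h \<in> H" "x = g + h" using G(2) x by blast
    then show ?thesis by (intro bexI[of _ g]) (simp_all add: add.assoc[symmetric])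
  qed
  then obtain r where r: "\<And>x. x \<in> X \<Longrightarrow> r x \<in> G" "\<And>x. x \<in> X \<Longrightarrow> - r x + x \<in> H"
    by metis
  define K where "K = (\<Union>x\<in>X. (+) (- r x + x) ` closure V)"
  have "finite G" by (rule G(1))
  moreover have "compact K"
    unfolding K_def using X(2) compact_left_translate[OF tg V(3)] by (intro compact_UN) auto
  moreover have "K \<subseteq> H"
    unfolding K_def using r(2) V(4) H(2) by blast
  moreover have "B \<subseteq> (\<Union>g\<in>G. (+) g ` K)"
  proof
    fix b assume "b \<in> B"
    then obtain x v where xv: "x \<in> X" "v \<in> V" "b = x + v" using X(3) by blast
    have "(- r x + x) + v \<in> K"
      unfolding K_def using xv(1,2) closure_subset[of V] by blast
    moreover have "b = r x + ((- r x + x) + v)"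
      by (simp add: xv(3) add.assoc[symmetric])
    ultimately show "b \<in> (\<Union>g\<in>G. (+) g ` K)" using r(1)[OF xv(1)] by blast
  qed
  ultimately show ?thesis using G(3) by (rule that)
qed

lemma setmul_left_translate_subset:
  assumes "C \<subseteq> reachable V"
  shows "setmul ((+) g ` C) V \<subseteq> (+) g ` reachable (V :: 'a::monoid_add set)"
proof
  fix z assume "z \<in> setmul ((+) g ` C) V"
  then obtain c v where cv: "c \<in> C" "v \<in> V" "z = g + (c + v)"
    unfolding setmul_iff by (auto simp: add.assoc)
  have "c + v \<in> reachable V" using assms cv(1,2) by (blast intro: reachable.step)
  with cv(3) show "z \<in> (+) g ` reachable V" by (rule image_eqI)
qed

lemma enumerate_finite_family:
  assumes "finite G" "B \<subseteq> (\<Union>g\<in>G. T g)" "\<forall>g\<in>G. \<forall>g'\<in>G. g \<noteq> g' \<longrightarrow> S g \<inter> S g' = {}"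
  obtains h :: "nat \<Rightarrow> 'a" where "B \<subseteq> (\<Union>i\<in>{1..card G}. T (h i))"
    "\<forall>i\<in>{1..card G}. \<forall>j\<in>{1..card G}. i \<noteq> j \<longrightarrow> S (h i) \<inter> S (h j) = {}"
proof -
  obtain h where h: "bij_betw h {1..card G} G" using ex_bij_betw_nat_finite_1[OF assms(1)] by blast
  show ?thesis
  proof (rule that)
    show "B \<subseteq> (\<Union>i\<in>{1..card G}. T (h i))"
    proof
      fix b assume "b \<in> B"
      then obtain g where g: "g \<in> G" "b \<in> T g" using assms(2) by blast
      then obtain i where "i \<in> {1..card G}" "g = h i"
        using bij_betw_imp_surj_on[OF h] by (metis imageE)
      then show "b \<in> (\<Union>i\<in>{1..card G}. T (h i))" using g(2) by blast
    qed
    show "\<forall>i\<in>{1..card G}. \<forall>j\<in>{1..card G}. i \<noteq> j \<longrightarrow> S (h i) \<inter> S (h j) = {}"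
    proof (intro ballI impI)
      fix i j assume "i \<in> {1..card G}" "j \<in> {1..card G}" "i \<noteq> j"
      then have "h i \<in> G" "h j \<in> G" "h i \<noteq> h j"
        using bij_betw_apply[OF h] inj_on_eq_iff[OF bij_betw_imp_inj_on[OF h]] by auto
      then show "S (h i) \<inter> S (h j) = {}" using assms(3) by blast
    qed
  qed
qed

theorem lemma10:
  fixes \<nu> :: "'a::{t2_space, group_add} measure"
    and V B :: "'a set"
  assumes "locally_compact_group TYPE('a)"
    and "haar_measure \<nu>"
    and "open V" and "0 \<in> V" and "uminus ` V = V" and "compact (closure V)"
    and "compact B"
  shows "\<exists>C' (n::nat) (g :: nat \<Rightarrow> 'a).
           regular_compact C' \<and>
           V_connected V (interior C') \<and>
           emeasure \<nu> (frontier C') = 0 \<and>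
           B \<subseteq> (\<Union>i\<in>{1..n}. (+) (g i) ` C') \<and>
           (\<forall>i\<in>{1..n}. \<forall>j\<in>{1..n}. i \<noteq> j \<longrightarrow>
              setmul ((+) (g i) ` C') V \<inter> setmul ((+) (g j) ` C') V = {})"
proof -
  have tg: "topological_group TYPE('a)"
    using assms(1) unfolding locally_compact_group_def by blast
  let ?H = "reachable V"
  obtain G K where G: "finite G" "compact K" "K \<subseteq> ?H" "B \<subseteq> (\<Union>g\<in>G. (+) g ` K)"
    "\<forall>g\<in>G. \<forall>g'\<in>G. g \<noteq> g' \<longrightarrow> (+) g ` ?H \<inter> (+) g' ` ?H = {}"
    by (rule compact_cover_by_coset_translates[OF tg assms(3,4,6)
        closure_subset_reachable[OF tg assms(3-5)] reachable.zero reachable_add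
        reachable_minus[OF assms(5)] assms(7)])
  obtain C' where C': "regular_compact C'" "V_connected V (interior C')"
    "emeasure \<nu> (frontier C') = 0" "K \<subseteq> C'" "C' \<subseteq> ?H"
    by (rule regular_compact_V_connected_hull[OF tg haar_measure_sets[OF assms(2)]
        haar_measure_compact_finite[OF assms(2)] assms(3-6) G(2,3)])
  have "B \<subseteq> (\<Union>g\<in>G. (+) g ` C')" using G(4) C'(4) by blast
  moreover have "\<forall>g\<in>G. \<forall>g'\<in>G. g \<noteq> g' \<longrightarrow>
      setmul ((+) g ` C') V \<inter> setmul ((+) g' ` C') V = {}"
  proof (intro ballI impI)
    fix g g' assume "g \<in> G" "g' \<in> G" "g \<noteq> g'"
    then have "(+) g ` ?H \<inter> (+) g' ` ?H = {}" using G(5) by blast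
    then show "setmul ((+) g ` C') V \<inter> setmul ((+) g' ` C') V = {}"
      using setmul_left_translate_subset[OF C'(5), of g] setmul_left_translate_subset[OF C'(5), of g']
      by blast
  qed
  ultimately obtain h where "B \<subseteq> (\<Union>i\<in>{1..card G}. (+) (h i) ` C')"
    "\<forall>i\<in>{1..card G}. \<forall>j\<in>{1..card G}. i \<noteq> j \<longrightarrow>
       setmul ((+) (h i) ` C') V \<inter> setmul ((+) (h j) ` C') V = {}"
    by (rule enumerate_finite_family[OF G(1)])
  then show ?thesis
    using C'(1-3) by (intro exI[of _ C'] exI[of _ "card G"] exI[of _ h] conjI)
qed

end
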